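(* Let $p$ be an odd prime, $n$ a positive integer with $\gcd(n,p)=1$, and let $S$ be a simultaneously negacyclic subspace of $\mathbb{F}_p^n\times\mathbb{F}_p^n$. Then $S$ is uniquely negacyclic if and only if every element of $S$ of the form $(\mathbf{0},\mathbf{b})$ has $\mathbf{b}=\mathbf{0}$. Further, if $S$ is uniquely negacyclic with generating pair $(g,f)$, then $S=\{(ag,af):a\in\mathcal{R}\}$ (computed in $\mathcal{R}$).
   Context: Let $N:\mathbb{F}_p^n\to\mathbb{F}_p^n$ be $(u_0,\dots,u_{n-1})\mapsto(-u_{n-1},u_0,\dots,u_{n-2})$; $S$ is simultaneously negacyclic if $(\mathbf{a},\mathbf{b})\in S$ implies $(N\mathbf{a},N\mathbf{b})\in S$. Let $\mathcal{R}=\mathbb{F}_p[X]/\langle X^n+1\rangle$, with vectors $(a_0,\dots,a_{n-1})\in\mathbb{F}_p^n$ identified with polynomials $a_0+a_1X+\cdots+a_{n-1}X^{n-1}\in\mathcal{R}$, so $S$ is also regarded as a subset of $\mathcal{R}\times\mathcal{R}$. Let $F=\{\mathbf{a}:(\mathbf{a},\mathbf{b})\in S\}$; it is an ideal of $\mathcal{R}$; let $g(X)$ be its generator (the monic polynomial of lowest degree in it, a divisor of $X^n+1$). $S$ is called uniquely negacyclic if there is a unique $f\in\mathcal{R}$ with $(g,f)\in S$; the pair $(g,f)$ is then called the generating pair of $S$. *)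

theory Defs
  imports "HOL-Computational_Algebra.Polynomial"
begin

text \<open>Vectors (u_0,...,u_{n-1}) in F_p^n are identified with polynomials
  u_0 + u_1 X + ... + u_{n-1} X^{n-1} of degree < n, i.e. with the reduced
  representatives of R = F_p[X]/(X^n+1).  F_p is a field type of cardinality p.\<close>

definition vecs :: "nat \<Rightarrow> 'a::field poly set" where
  "vecs n = {u. degree u < n}"

definition rmult :: "nat \<Rightarrow> 'a::field poly \<Rightarrow> 'a poly \<Rightarrow> 'a poly" where
  "rmult n a b = (a * b) mod (monom 1 n + 1)"

definition negashift :: "nat \<Rightarrow> 'a::field poly \<Rightarrow> 'a poly" where
  "negashift n u = monom (- coeff u (n - 1)) 0 + (\<Sum>i<n - 1. monom (coeff u i) (i + 1))"

definition is_subspace :: "nat \<Rightarrow> ('a::field poly \<times> 'a poly) set \<Rightarrow> bool" where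
  "is_subspace n S \<longleftrightarrow> S \<subseteq> vecs n \<times> vecs n \<and> (0, 0) \<in> S \<and>
     (\<forall>x\<in>S. \<forall>y\<in>S. (fst x + fst y, snd x + snd y) \<in> S) \<and>
     (\<forall>c. \<forall>x\<in>S. (smult c (fst x), smult c (snd x)) \<in> S)"

definition simult_negacyclic :: "nat \<Rightarrow> ('a::field poly \<times> 'a poly) set \<Rightarrow> bool" where
  "simult_negacyclic n S \<longleftrightarrow> (\<forall>a b. (a, b) \<in> S \<longrightarrow> (negashift n a, negashift n b) \<in> S)"

text \<open>g generates the ideal F: the monic polynomial of least degree in F; for the zero
  ideal the generator is X^n+1, which is 0 in R.\<close>
definition is_ideal_gen :: "'a::field poly set \<Rightarrow> 'a poly \<Rightarrow> bool" where
  "is_ideal_gen F g \<longleftrightarrow>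
     (F \<subseteq> {0} \<and> g = 0) \<or>
     (\<not> F \<subseteq> {0} \<and> g \<in> F \<and> lead_coeff g = 1 \<and> (\<forall>h\<in>F. h \<noteq> 0 \<longrightarrow> degree g \<le> degree h))"

definition first_comp :: "('a::field poly \<times> 'a poly) set \<Rightarrow> 'a poly set" where
  "first_comp S = {a. \<exists>b. (a, b) \<in> S}"

definition generator :: "('a::field poly \<times> 'a poly) set \<Rightarrow> 'a poly" where
  "generator S = (THE g. is_ideal_gen (first_comp S) g)"

definition uniquely_negacyclic :: "('a::field poly \<times> 'a poly) set \<Rightarrow> bool" where
  "uniquely_negacyclic S \<longleftrightarrow> (\<exists>!f. (generator S, f) \<in> S)"

definition generating_pair :: "('a::field poly \<times> 'a poly) set \<Rightarrow> 'a poly \<Rightarrow> 'a poly \<Rightarrow> bool" where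
  "generating_pair S g f \<longleftrightarrow> uniquely_negacyclic S \<and> g = generator S \<and> (g, f) \<in> S"

end

theory Submission
  imports Defs
begin

text \<open>The shift N is multiplication by X in R, so a simultaneously negacyclic subspace S is
  an R-submodule of R \<times> R, and its first projection F is an ideal.  Its monic generator g
  divides every first component, hence every (u, v) \<in> S has the form (a g, v) and subtracting
  the multiple (a g, a f) of the generating pair leaves an element (0, b) of S.  So S consists
  of the multiples of (g, f) exactly when the second component is determined by the first,
  i.e. when (0, b) \<in> S forces b = 0.\<close>

lemma coeff_negashift:
  assumes "n > 0"
  shows "coeff (negashift n u) k =
    (if k = 0 then - coeff u (n - 1) else if k < n then coeff u (k - 1) else 0)"
proof -
  have "coeff (\<Sum>i<n - 1. monom (coeff u i) (i + 1)) k =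
      (\<Sum>i<n - 1. if i = k - 1 \<and> 0 < k then coeff u i else 0)"
    by (auto simp: coeff_sum intro!: sum.cong)
  also have "\<dots> = (if 0 < k \<and> k < n then coeff u (k - 1) else 0)"
    using assms by auto
  finally show ?thesis
    unfolding negashift_def by auto
qed

lemma degree_negashift_less: "n > 0 \<Longrightarrow> degree (negashift n u) < n"
  by (rule degree_lessI) (auto simp: coeff_negashift)

lemma degree_monom_plus_1: "n > 0 \<Longrightarrow> degree (monom (1::'a::field) n + 1) = n"
  by (simp add: degree_add_eq_left degree_monom_eq)

lemma pCons_0_mod_eq_negashift:
  fixes u :: "'a::field poly"
  assumes n: "n > 0" and u: "degree u < n"
  shows "pCons 0 u mod (monom 1 n + 1) = negashift n u"
proof -
  have "pCons 0 u = negashift n u + [:coeff u (n - 1):] * (monom 1 n + 1)"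
  proof (rule poly_eqI)
    fix k
    show "coeff (pCons 0 u) k = coeff (negashift n u + [:coeff u (n - 1):] * (monom 1 n + 1)) k"
      using n u by (cases k) (auto simp: coeff_negashift coeff_eq_0)
  qed
  then have "pCons 0 u mod (monom 1 n + 1) = negashift n u mod (monom 1 n + 1)"
    by (metis mod_mult_self1)
  also have "\<dots> = negashift n u"
    by (rule mod_poly_less) (simp add: degree_monom_plus_1 degree_negashift_less n)
  finally show ?thesis .
qed

lemma rmult_eq_mult:
  assumes "n > 0" and "degree (q * g) < n"
  shows "rmult n (q mod (monom 1 n + 1)) g = q * g"
  using assms by (simp add: rmult_def mod_mult_left_eq mod_poly_less degree_monom_plus_1)

lemma mod_monom_plus_1_in_vecs:
  assumes "n > 0"
  shows "q mod (monom 1 n + 1) \<in> vecs n"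
proof -
  have "monom 1 n + 1 \<noteq> (0::'a::field poly)"
    using assms degree_monom_plus_1[OF assms, where 'a='a] by auto
  then show ?thesis
    using assms degree_mod_less[of "monom 1 n + 1" q]
    by (auto simp: vecs_def degree_monom_plus_1)
qed

lemma rmult_in_vecs: "n > 0 \<Longrightarrow> rmult n a b \<in> vecs n"
  unfolding rmult_def by (rule mod_monom_plus_1_in_vecs)

lemma subspace_add:
  "is_subspace n S \<Longrightarrow> (a, b) \<in> S \<Longrightarrow> (a', b') \<in> S \<Longrightarrow> (a + a', b + b') \<in> S"
  unfolding is_subspace_def by force

lemma subspace_smult:
  "is_subspace n S \<Longrightarrow> (a, b) \<in> S \<Longrightarrow> (smult c a, smult c b) \<in> S"
  unfolding is_subspace_def by force

lemma subspace_diff: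
  assumes "is_subspace n S" and "(a, b) \<in> S" and "(a', b') \<in> S"
  shows "(a - a', b - b') \<in> S"
  using subspace_add[OF assms(1,2) subspace_smult[OF assms(1,3), of "-1"]] by simp

lemma negacyclic_subspace_rmult:
  assumes n: "n > 0" and S: "is_subspace n S" and N: "simult_negacyclic n S"
    and xy: "(x, y) \<in> S"
  shows "(rmult n a x, rmult n a y) \<in> S"
proof (induction a rule: pCons_induct)
  case 0
  then show ?case
    using S by (simp add: rmult_def is_subspace_def)
next
  case (pCons c a)
  let ?m = "monom 1 n + 1 :: 'a poly"
  have step: "rmult n (pCons c a) z = smult c z + negashift n (rmult n a z)"
    if "degree z < n" for z
  proof -
    have "rmult n (pCons c a) z = smult c z mod ?m + pCons 0 (a * z) mod ?m"
      by (simp add: rmult_def poly_mod_add_left)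
    also have "smult c z mod ?m = smult c z"
      using that degree_smult_le[of c z]
      by (intro mod_poly_less) (simp add: degree_monom_plus_1 n)
    also have "pCons 0 (a * z) mod ?m = [:0, 1:] * (a * z) mod ?m"
      by simp
    also have "\<dots> = [:0, 1:] * rmult n a z mod ?m"
      unfolding rmult_def by (rule mod_mult_right_eq[symmetric])
    also have "\<dots> = pCons 0 (rmult n a z) mod ?m"
      by simp
    also have "\<dots> = negashift n (rmult n a z)"
      using rmult_in_vecs[OF n] by (intro pCons_0_mod_eq_negashift n) (simp add: vecs_def)
    finally show ?thesis .
  qed
  have "(negashift n (rmult n a x), negashift n (rmult n a y)) \<in> S"
    using N pCons.IH unfolding simult_negacyclic_def by blast
  moreover have "degree x < n" "degree y < n"
    using S xy by (auto simp: is_subspace_def vecs_def)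
  ultimately show ?case
    using subspace_add[OF S subspace_smult[OF S xy]] by (simp add: step)
qed

lemma ex1_ideal_gen:
  fixes F :: "'a::field poly set"
  assumes diff: "\<And>x y. x \<in> F \<Longrightarrow> y \<in> F \<Longrightarrow> x - y \<in> F"
    and smult: "\<And>c x. x \<in> F \<Longrightarrow> smult c x \<in> F"
  shows "\<exists>!g. is_ideal_gen F g"
proof (cases "F \<subseteq> {0}")
  case True
  then show ?thesis unfolding is_ideal_gen_def by auto
next
  case False
  then obtain h where h: "h \<in> F" "h \<noteq> 0" and h_min: "\<And>h'. h' \<in> F \<Longrightarrow> h' \<noteq> 0 \<Longrightarrow> degree h \<le> degree h'"
    using ex_has_least_nat[of "\<lambda>h. h \<in> F \<and> h \<noteq> 0" _ degree] by blast
  have "is_ideal_gen F (smult (inverse (lead_coeff h)) h)"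
    using False h h_min smult unfolding is_ideal_gen_def by simp
  moreover have "g1 = g2" if "is_ideal_gen F g1" "is_ideal_gen F g2" for g1 g2
  proof (rule ccontr)
    assume ne: "g1 \<noteq> g2"
    have g1: "g1 \<in> F" "lead_coeff g1 = 1" "\<And>h. h \<in> F \<Longrightarrow> h \<noteq> 0 \<Longrightarrow> degree g1 \<le> degree h"
      and g2: "g2 \<in> F" "lead_coeff g2 = 1" "\<And>h. h \<in> F \<Longrightarrow> h \<noteq> 0 \<Longrightarrow> degree g2 \<le> degree h"
      using that False unfolding is_ideal_gen_def by auto
    then have deg: "degree g1 = degree g2"
      by (metis le_antisym one_neq_zero leading_coeff_0_iff)
    have "coeff (g1 - g2) (degree g1) = 0"
      using g1(2) g2(2) deg by simp
    moreover have "degree (g1 - g2) \<le> degree g1"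
      using degree_diff_le_max[of g1 g2] deg by simp
    moreover have "g1 - g2 \<noteq> 0"
      using ne by simp
    ultimately have "degree (g1 - g2) < degree g1"
      by (metis le_neq_implies_less leading_coeff_0_iff)
    then show False
      using g1(3)[OF diff[OF g1(1) g2(1)]] ne by simp
  qed
  ultimately show ?thesis by blast
qed

lemma first_comp_diff:
  "is_subspace n S \<Longrightarrow> x \<in> first_comp S \<Longrightarrow> y \<in> first_comp S \<Longrightarrow> x - y \<in> first_comp S"
  unfolding first_comp_def by (blast intro: subspace_diff)

lemma first_comp_smult:
  "is_subspace n S \<Longrightarrow> x \<in> first_comp S \<Longrightarrow> smult c x \<in> first_comp S"
  unfolding first_comp_def by (blast intro: subspace_smult)

lemma is_ideal_gen_generator:
  "is_subspace n S \<Longrightarrow> is_ideal_gen (first_comp S) (generator S)"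
  unfolding generator_def
  by (rule theI') (intro ex1_ideal_gen first_comp_diff first_comp_smult; assumption)

lemma generator_in_first_comp:
  assumes "is_subspace n S"
  shows "generator S \<in> first_comp S"
  using is_ideal_gen_generator[OF assms] assms
  by (auto simp: is_ideal_gen_def first_comp_def is_subspace_def)

lemma generator_dvd:
  assumes n: "n > 0" and S: "is_subspace n S" and N: "simult_negacyclic n S"
    and u: "u \<in> first_comp S"
  shows "generator S dvd u"
proof (cases "u = 0")
  case False
  let ?g = "generator S"
  have "is_ideal_gen (first_comp S) ?g"
    by (rule is_ideal_gen_generator[OF S])
  then have g_min: "\<And>h. h \<in> first_comp S \<Longrightarrow> h \<noteq> 0 \<Longrightarrow> degree ?g \<le> degree h"
    and "?g \<noteq> 0"
    using u False by (auto simp: is_ideal_gen_def)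
  then have r: "u mod ?g = 0 \<or> degree (u mod ?g) < degree ?g"
    by (simp add: degree_mod_less)
  have "degree u < n"
    using S u by (auto simp: first_comp_def is_subspace_def vecs_def)
  with r g_min[OF u False] have "degree (u - u mod ?g) < n"
    by (intro degree_diff_less) auto
  then have qg: "rmult n (u div ?g mod (monom 1 n + 1)) ?g = u div ?g * ?g"
    by (intro rmult_eq_mult n) (simp add: minus_mod_eq_div_mult)
  obtain f where "(?g, f) \<in> S"
    using generator_in_first_comp[OF S] unfolding first_comp_def by blast
  from negacyclic_subspace_rmult[OF n S N this]
  have "u div ?g * ?g \<in> first_comp S"
    unfolding first_comp_def qg[symmetric] by blast
  then have "u mod ?g \<in> first_comp S"
    using first_comp_diff[OF S u] by (metis minus_div_mult_eq_mod)
  with r g_min have "u mod ?g = 0"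
    by force
  then show ?thesis
    by (simp add: mod_eq_0_iff_dvd)
qed simp

lemma subspace_snd_unique:
  assumes "is_subspace n S" and "\<forall>b. (0, b) \<in> S \<longrightarrow> b = 0"
    and "(u, v) \<in> S" and "(u, v') \<in> S"
  shows "v = v'"
proof -
  have "(0, v - v') \<in> S"
    using subspace_diff[OF assms(1,3,4)] by simp
  then have "v - v' = 0"
    using assms(2) by blast
  then show ?thesis
    by simp
qed

lemma uniquely_negacyclic_iff:
  assumes S: "is_subspace n S"
  shows "uniquely_negacyclic S \<longleftrightarrow> (\<forall>b. (0, b) \<in> S \<longrightarrow> b = 0)"
proof
  assume "uniquely_negacyclic S"
  then obtain f where f: "(generator S, f) \<in> S" and f_unique: "\<And>f'. (generator S, f') \<in> S \<Longrightarrow> f' = f"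
    unfolding uniquely_negacyclic_def by blast
  show "\<forall>b. (0, b) \<in> S \<longrightarrow> b = 0"
  proof (intro allI impI)
    fix b
    assume "(0, b) \<in> S"
    then have "(generator S, f + b) \<in> S"
      using subspace_add[OF S f] by fastforce
    then show "b = 0"
      using f_unique by fastforce
  qed
next
  assume "\<forall>b. (0, b) \<in> S \<longrightarrow> b = 0"
  then show "uniquely_negacyclic S"
    using generator_in_first_comp[OF S] subspace_snd_unique[OF S]
    unfolding uniquely_negacyclic_def first_comp_def by blast
qed

lemma negacyclic_subspace_eq_multiples:
  assumes n: "n > 0" and S: "is_subspace n S" and N: "simult_negacyclic n S"
    and zero: "\<forall>b. (0, b) \<in> S \<longrightarrow> b = 0" and f: "(generator S, f) \<in> S"
  shows "S = {(rmult n a (generator S), rmult n a f) | a. a \<in> vecs n}"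
proof (intro equalityI subsetI)
  fix x
  assume "x \<in> S"
  then obtain u v where x: "x = (u, v)" and uv: "(u, v) \<in> S"
    by (cases x) auto
  then have "generator S dvd u"
    using generator_dvd[OF n S N] by (auto simp: first_comp_def)
  then obtain q where u: "u = q * generator S"
    by (metis dvd_def mult.commute)
  define a where "a = q mod (monom 1 n + 1)"
  have "degree u < n"
    using S uv by (auto simp: is_subspace_def vecs_def)
  then have a_g: "rmult n a (generator S) = u"
    unfolding a_def u by (rule rmult_eq_mult[OF n])
  then have "(u, rmult n a f) \<in> S"
    using negacyclic_subspace_rmult[OF n S N f, of a] by simp
  then have "v = rmult n a f"
    using subspace_snd_unique[OF S zero uv] by simp
  moreover have "a \<in> vecs n"
    unfolding a_def by (rule mod_monom_plus_1_in_vecs[OF n])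
  ultimately show "x \<in> {(rmult n a (generator S), rmult n a f) | a. a \<in> vecs n}"
    using x a_g by blast
next
  fix x
  assume "x \<in> {(rmult n a (generator S), rmult n a f) | a. a \<in> vecs n}"
  then show "x \<in> S"
    using negacyclic_subspace_rmult[OF n S N f] by auto
qed

theorem mainTheorem4:
  fixes S :: "('a::{field,finite} poly \<times> 'a poly) set" and p n :: nat
  assumes "prime p" and "odd p" and "card (UNIV :: 'a set) = p"
    and "n > 0" and "coprime n p"
    and "is_subspace n S" and "simult_negacyclic n S"
  shows "(uniquely_negacyclic S \<longleftrightarrow> (\<forall>b. (0, b) \<in> S \<longrightarrow> b = 0)) \<and>
         (\<forall>g f. generating_pair S g f \<longrightarrow>
            S = {(rmult n a g, rmult n a f) | a. a \<in> vecs n})"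
proof (intro conjI allI impI)
  note n = \<open>n > 0\<close> and S = \<open>is_subspace n S\<close> and N = \<open>simult_negacyclic n S\<close>
  show unique: "uniquely_negacyclic S \<longleftrightarrow> (\<forall>b. (0, b) \<in> S \<longrightarrow> b = 0)"
    by (rule uniquely_negacyclic_iff[OF S])
  fix g f
  assume "generating_pair S g f"
  then show "S = {(rmult n a g, rmult n a f) | a. a \<in> vecs n}"
    using negacyclic_subspace_eq_multiples[OF n S N] unique
    unfolding generating_pair_def by blast
qed

end
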